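(* Let $\mathbb{F}=\mathbb{F}_{FSD}$, let $x_0>0$, and assume conditions (C2), (C3), (C4) hold with least favorable measure $\mathbb{P}^*$. Let $(W_{\mathbb{P}})_{\mathbb{P}\in\mathcal{P}}$ be a law invariant family of preferences that is $\mathbb{F}_{FSD}$-family consistent on $\mathcal{Y}^{x_0}_{(W_{\mathbb{P}})_{\mathbb{P}\in\mathcal{P}}}$ with respect to $\mathbb{P}^*$, and suppose the robust problem $\max_{X\in\mathcal{Y}^{x_0}_{(W_{\mathbb{P}})_{\mathbb{P}\in\mathcal{P}}}}\inf_{\mathbb{P}\in\mathcal{P}}W_{\mathbb{P}}(X)$ has a unique solution $\tilde X$. Then $\tilde X$ is $\mathbb{P}^*$-cost-efficient.
   Context: Standing setting: fix $T>0$, $r\in\mathbb{R}$, $S_0>0$, and write $\mathbb{R}_+=[0,\infty)$. Let $S_T:\Omega\to\mathbb{R}_+$ be a random variable and $\mathcal{F}=\sigma(S_T)$. $\mathcal{P}$ is a set of mutually equivalent probability measures on $(\Omega,\mathcal{F})$, and $\mathbb{Q}$ is a probability measure on $(\Omega,\mathcal{F})$ equivalent to every $\mathbb{P}\in\mathcal{P}$. The set of payoffs is $\mathcal{X}=\{g(S_T): g:\mathbb{R}_+\to\mathbb{R}_+\text{ measurable}, E_{\mathbb{Q}}[|g(S_T)|]<\infty\}$, with price $e^{-rT}E_{\mathbb{Q}}[X]$. For $\mathbb{P}\in\mathcal{P}$, $\ell^{\mathbb{P}}=d\mathbb{P}/d\mathbb{Q}$; $F_X^{\mathbb{P}}$ is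 the cdf of $X$ under $\mathbb{P}$. For a set $\mathbb{F}$ of measurable functions $\mathbb{R}_+\to\mathbb{R}$ and cdfs $F,G$ on $\mathbb{R}_+$, $F\preceq_{\mathbb{F}}G$ means $\int f\,dF\le\int f\,dG$ for all $f\in\mathbb{F}$ with finite integrals. $\mathbb{F}_{FSD}$ is the set of all non-decreasing functions $\mathbb{R}_+\to\mathbb{R}$. Standard cost-efficiency under $\mathbb{P}$ for a cdf $F_0$: $\inf\{e^{-rT}E_{\mathbb{Q}}[X]:X\in\mathcal{X},F_X^{\mathbb{P}}=F_0\}$; $X$ is $\mathbb{P}$-cost-efficient if it solves this for $F_0=F_X^{\mathbb{P}}$. $\mathbb{F}$ is composition-consistent if $f,g\in\mathbb{F}\Rightarrow f\circ g\in\mathbb{F}$; cost-consistent if for all $X,Y\in\mathcal{X}$ and $\mathbb{P}\in\mathcal{P}$ with $X,Y$ both $\mathbb{P}$-cost-efficient, $F_X^{\mathbb{P}}\preceq_{\mathbb{F}}F_Y^{\mathbb{P}}$ implies $E_{\mathbb{Q}}[X]\le E_{\mathbb{Q}}[Y]$, strictly if also $F_X^{\mathbb{P}}\ne F_Y^{\mathbb{P}}$. Least favorable measure: $\mathbb{P}^*\in\mathcal{P}$ with $\ell^*=d\mathbb{P}^*/d\mathbb{Q}$ such that $F_{\ell^*}^{\mathbb{P}^*}\preceq_{\mathbb{F}}F_{\ell^*}^{\mathbb{P}}$ for all $\mathbb{P}\in\mathcal{P}$. (C2) $\mathbb{F}$ composition- and cost-consistent; (C3) $\mathcal{P}$ contains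 a least favorable measure $\mathbb{P}^*$ w.r.t. $\mathbb{F}$; (C4) $x\mapsto F^{\mathbb{P}^*}_{\ell^*}(x)$ is continuous and $1/\ell^*$ has finite variance under $\mathbb{P}^*$. Preferences: a preference is a functional $W:\mathcal{X}\to\mathbb{R}$; $W_{\mathbb{P}}$ is $\mathbb{P}$-law invariant if $F_X^{\mathbb{P}}=F_Y^{\mathbb{P}}$ implies $W_{\mathbb{P}}(X)=W_{\mathbb{P}}(Y)$, and a family is law invariant if each member is. For $\mathcal{Y}\subset\mathcal{X}$, $(W_{\mathbb{P}})_{\mathbb{P}\in\mathcal{P}}$ is $\mathbb{F}$-family consistent on $\mathcal{Y}$ w.r.t. $\mathbb{P}^*$ if for every $Y\in\mathcal{Y}$, $F_Y^{\mathbb{P}^*}\preceq_{\mathbb{F}}F_Y^{\mathbb{P}}$ for all $\mathbb{P}$ implies $W_{\mathbb{P}^*}(Y)\le W_{\mathbb{P}}(Y)$ for all $\mathbb{P}$. For $x_0>0$: $\mathcal{Y}^{x_0}_{W_{\mathbb{P}}}=\{X\in\mathcal{X}:W_{\mathbb{P}}(X)\in\mathbb{R},\ e^{-rT}E_{\mathbb{Q}}[X]\le x_0\}$ and $\mathcal{Y}^{x_0}_{(W_{\mathbb{P}})_{\mathbb{P}\in\mathcal{P}}}=\bigcap_{\mathbb{P}\in\mathcal{P}}\mathcal{Y}^{x_0}_{W_{\mathbb{P}}}$. *)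

theory Defs
  imports "HOL-Probability.Probability"
begin

definition payoff :: "'a measure \<Rightarrow> ('a \<Rightarrow> real) \<Rightarrow> ('a \<Rightarrow> real) \<Rightarrow> bool" where
  "payoff Q S X \<longleftrightarrow>
     (\<exists>g. g \<in> borel_measurable borel \<and> (\<forall>x\<ge>0. 0 \<le> g x) \<and> X = (\<lambda>\<omega>. g (S \<omega>)))
     \<and> integrable Q X"

definition price :: "real \<Rightarrow> real \<Rightarrow> 'a measure \<Rightarrow> ('a \<Rightarrow> real) \<Rightarrow> real" where
  "price r T Q X = exp (- r * T) * (\<integral>\<omega>. X \<omega> \<partial>Q)"

definition law_cdf :: "'a measure \<Rightarrow> ('a \<Rightarrow> real) \<Rightarrow> real \<Rightarrow> real" where
  "law_cdf P X = (\<lambda>x. measure P {\<omega> \<in> space P. X \<omega> \<le> x})"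

definition density_ratio :: "'a measure \<Rightarrow> 'a measure \<Rightarrow> 'a \<Rightarrow> real" where
  "density_ratio Q P = (\<lambda>\<omega>. enn2real (RN_deriv Q P \<omega>))"

definition stoch_le :: "(real \<Rightarrow> real) set \<Rightarrow> (real \<Rightarrow> real) \<Rightarrow> (real \<Rightarrow> real) \<Rightarrow> bool" where
  "stoch_le FF F G \<longleftrightarrow>
     (\<forall>f\<in>FF. integrable (interval_measure F) f \<longrightarrow> integrable (interval_measure G) f \<longrightarrow>
        (\<integral>x. f x \<partial>interval_measure F) \<le> (\<integral>x. f x \<partial>interval_measure G))"

definition F_FSD :: "(real \<Rightarrow> real) set" where
  "F_FSD = {f. mono f}"

definition cost_efficient :: "real \<Rightarrow> real \<Rightarrow> 'a measure \<Rightarrow> ('a \<Rightarrow> real) \<Rightarrow> 'a measure \<Rightarrow> ('a \<Rightarrow> real) \<Rightarrow> bool" where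
  "cost_efficient r T Q S P X \<longleftrightarrow> payoff Q S X \<and>
     (\<forall>Y. payoff Q S Y \<and> law_cdf P Y = law_cdf P X \<longrightarrow> price r T Q X \<le> price r T Q Y)"

definition composition_consistent :: "(real \<Rightarrow> real) set \<Rightarrow> bool" where
  "composition_consistent FF \<longleftrightarrow> (\<forall>f\<in>FF. \<forall>g\<in>FF. f \<circ> g \<in> FF)"

definition cost_consistent ::
  "(real \<Rightarrow> real) set \<Rightarrow> real \<Rightarrow> real \<Rightarrow> 'a measure \<Rightarrow> ('a \<Rightarrow> real) \<Rightarrow> 'a measure set \<Rightarrow> bool" where
  "cost_consistent FF r T Q S Ps \<longleftrightarrow>
     (\<forall>X Y. \<forall>P\<in>Ps. payoff Q S X \<longrightarrow> payoff Q S Y \<longrightarrow>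
        cost_efficient r T Q S P X \<longrightarrow> cost_efficient r T Q S P Y \<longrightarrow>
        stoch_le FF (law_cdf P X) (law_cdf P Y) \<longrightarrow>
        ((\<integral>\<omega>. X \<omega> \<partial>Q) \<le> (\<integral>\<omega>. Y \<omega> \<partial>Q) \<and>
         (law_cdf P X \<noteq> law_cdf P Y \<longrightarrow> (\<integral>\<omega>. X \<omega> \<partial>Q) < (\<integral>\<omega>. Y \<omega> \<partial>Q))))"

definition least_favorable ::
  "(real \<Rightarrow> real) set \<Rightarrow> 'a measure \<Rightarrow> 'a measure set \<Rightarrow> 'a measure \<Rightarrow> bool" where
  "least_favorable FF Q Ps Pst \<longleftrightarrow> Pst \<in> Ps \<and>
     (\<forall>P\<in>Ps. stoch_le FF (law_cdf Pst (density_ratio Q Pst)) (law_cdf P (density_ratio Q Pst)))"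

definition law_invariant_family ::
  "'a measure \<Rightarrow> ('a \<Rightarrow> real) \<Rightarrow> 'a measure set \<Rightarrow> ('a measure \<Rightarrow> ('a \<Rightarrow> real) \<Rightarrow> real) \<Rightarrow> bool" where
  "law_invariant_family Q S Ps W \<longleftrightarrow>
     (\<forall>P\<in>Ps. \<forall>X Y. payoff Q S X \<longrightarrow> payoff Q S Y \<longrightarrow> law_cdf P X = law_cdf P Y \<longrightarrow> W P X = W P Y)"

definition family_consistent ::
  "(real \<Rightarrow> real) set \<Rightarrow> 'a measure set \<Rightarrow> ('a measure \<Rightarrow> ('a \<Rightarrow> real) \<Rightarrow> real) \<Rightarrow>
   ('a \<Rightarrow> real) set \<Rightarrow> 'a measure \<Rightarrow> bool" where
  "family_consistent FF Ps W YY Pst \<longleftrightarrow>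
     (\<forall>Y\<in>YY. (\<forall>P\<in>Ps. stoch_le FF (law_cdf Pst Y) (law_cdf P Y)) \<longrightarrow> (\<forall>P\<in>Ps. W Pst Y \<le> W P Y))"

text \<open>\<Y>^{x0}_{W_P}; W is real valued, so the finiteness condition is automatic.\<close>
definition budget_set ::
  "real \<Rightarrow> real \<Rightarrow> 'a measure \<Rightarrow> ('a \<Rightarrow> real) \<Rightarrow> (('a \<Rightarrow> real) \<Rightarrow> real) \<Rightarrow> real \<Rightarrow> ('a \<Rightarrow> real) set" where
  "budget_set r T Q S WP x0 = {X. payoff Q S X \<and> WP X \<in> \<real> \<and> price r T Q X \<le> x0}"

definition family_budget_set ::
  "real \<Rightarrow> real \<Rightarrow> 'a measure \<Rightarrow> ('a \<Rightarrow> real) \<Rightarrow> 'a measure set \<Rightarrow>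
   ('a measure \<Rightarrow> ('a \<Rightarrow> real) \<Rightarrow> real) \<Rightarrow> real \<Rightarrow> ('a \<Rightarrow> real) set" where
  "family_budget_set r T Q S Ps W x0 = (\<Inter>P\<in>Ps. budget_set r T Q S (W P) x0)"

definition robust_value :: "'a measure set \<Rightarrow> ('a measure \<Rightarrow> ('a \<Rightarrow> real) \<Rightarrow> real) \<Rightarrow> ('a \<Rightarrow> real) \<Rightarrow> ereal" where
  "robust_value Ps W X = (INF P\<in>Ps. ereal (W P X))"

definition unique_robust_solution ::
  "'a measure \<Rightarrow> ('a \<Rightarrow> real) set \<Rightarrow> 'a measure set \<Rightarrow> ('a measure \<Rightarrow> ('a \<Rightarrow> real) \<Rightarrow> real) \<Rightarrow> ('a \<Rightarrow> real) \<Rightarrow> bool" where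
  "unique_robust_solution Q YY Ps W Xt \<longleftrightarrow> Xt \<in> YY \<and>
     (\<forall>X\<in>YY. robust_value Ps W X \<le> robust_value Ps W Xt) \<and>
     (\<forall>X\<in>YY. robust_value Ps W X = robust_value Ps W Xt \<longrightarrow> (AE \<omega> in Q. X \<omega> = Xt \<omega>))"

end

theory Submission
  imports Defs
begin

text \<open>
  Suppose \<open>X\<close> were not cost-efficient under the least favorable measure \<open>P\<^sup>*\<close>, and let
  \<open>\<ell>\<^sup>* = dP\<^sup>*/dQ\<close>.  Since \<open>\<F> = \<sigma>(S\<^sub>T)\<close>, \<open>\<ell>\<^sup>*\<close> is a function of \<open>S\<^sub>T\<close>, and because its
  \<open>P\<^sup>*\<close>-law is continuous the quantile transform \<open>Z = F\<^sub>X\<^sup>-\<^sup>1(F\<^sub>\<ell>\<^sub>*(\<ell>\<^sup>*))\<close> is a payoff with the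
  same \<open>P\<^sup>*\<close>-law as \<open>X\<close>.  As \<open>E\<^sub>Q[Z] = E\<^sub>P\<^sub>*[Z / \<ell>\<^sup>*]\<close> and \<open>Z\<close> is comonotone with \<open>\<ell>\<^sup>*\<close>,
  a bathtub (rearrangement) argument shows that \<open>Z\<close> is the cheapest payoff with this law, so
  \<open>Z\<close> is strictly cheaper than \<open>X\<close> and lies in the budget set.  Being a non-decreasing
  function of \<open>\<ell>\<^sup>*\<close>, \<open>Z\<close> inherits the first order dominance of the law of \<open>\<ell>\<^sup>*\<close> under \<open>P\<^sup>*\<close> by its
  law under every \<open>P\<close>; family consistency and law invariance then give
  \<open>inf\<^sub>P W\<^sub>P(Z) \<ge> W\<^sub>P\<^sub>*(Z) = W\<^sub>P\<^sub>*(X) \<ge> inf\<^sub>P W\<^sub>P(X)\<close>.  Hence \<open>Z\<close> is also optimal, so \<open>Z = X\<close>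
  by uniqueness, contradicting \<open>E\<^sub>Q[Z] < E\<^sub>Q[X]\<close>.
\<close>

section \<open>Functions measurable with respect to \<open>\<sigma>(S)\<close>\<close>

lemma vimage_algebra_measurable_factor:
  fixes f :: "'a \<Rightarrow> real" and S :: "'a \<Rightarrow> real"
  assumes sets_Q: "sets Q = sets (vimage_algebra (space Q) S borel)"
    and f: "f \<in> borel_measurable Q"
  obtains \<phi> where "\<phi> \<in> borel_measurable borel" "\<And>\<omega>. \<omega> \<in> space Q \<Longrightarrow> f \<omega> = \<phi> (S \<omega>)"
proof -
  have sets_eq: "sets Q = {S -` A \<inter> space Q | A. A \<in> sets borel}"
  proof -
    have "S \<in> space Q \<rightarrow> space borel" by simp
    from sets_vimage_algebra2[OF this] sets_Q show ?thesis by (simp only:)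
  qed
  have "\<forall>r::rat. \<exists>A. A \<in> sets borel \<and> {\<omega>\<in>space Q. f \<omega> < of_rat r} = S -` A \<inter> space Q"
  proof
    fix r :: rat
    have "{\<omega>\<in>space Q. f \<omega> < of_rat r} \<in> sets Q" using f by measurable
    then show "\<exists>A. A \<in> sets borel \<and> {\<omega>\<in>space Q. f \<omega> < of_rat r} = S -` A \<inter> space Q"
      unfolding sets_eq by blast
  qed
  then obtain A where A: "\<And>r. A r \<in> sets borel"
    "\<And>r. {\<omega>\<in>space Q. f \<omega> < of_rat r} = S -` A r \<inter> space Q"
    by metis
  \<comment> \<open>Monotone in \<open>r\<close>, so that \<open>\<phi>(x) = inf {r. x \<in> B r}\<close> recovers \<open>f\<close>.\<close>
  define B where "B r = (\<Union>r'\<in>{r'. r' \<le> r}. A r')" for r :: rat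
  have B_borel: "B r \<in> sets borel" for r
    unfolding B_def by (rule sets.countable_UN'') (simp_all add: A)
  have B_vimage: "S -` B r \<inter> space Q = {\<omega>\<in>space Q. f \<omega> < of_rat r}" for r
  proof
    show "S -` B r \<inter> space Q \<subseteq> {\<omega> \<in> space Q. f \<omega> < of_rat r}"
    proof
      fix \<omega> assume "\<omega> \<in> S -` B r \<inter> space Q"
      then obtain r' where "r' \<le> r" "\<omega> \<in> S -` A r' \<inter> space Q" unfolding B_def by auto
      then have "f \<omega> < of_rat r'" "\<omega> \<in> space Q" using A(2)[of r'] by auto
      moreover have "real_of_rat r' \<le> real_of_rat r" using \<open>r' \<le> r\<close> by (simp add: of_rat_less_eq)
      ultimately show "\<omega> \<in> {\<omega> \<in> space Q. f \<omega> < of_rat r}" by simp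
    qed
    show "{\<omega> \<in> space Q. f \<omega> < of_rat r} \<subseteq> S -` B r \<inter> space Q"
      using A(2)[of r] unfolding B_def by auto
  qed
  define \<psi> where "\<psi> x = (INF r\<in>UNIV. (if x \<in> B r then ereal (of_rat r) else \<infinity>))" for x
  have "\<psi> \<in> borel_measurable borel"
    unfolding \<psi>_def by (intro borel_measurable_INF) (auto intro!: measurable_If_set B_borel)
  then have \<phi>_meas: "(\<lambda>x. real_of_ereal (\<psi> x)) \<in> borel_measurable borel" by measurable
  have "\<psi> (S \<omega>) = ereal (f \<omega>)" if \<omega>: "\<omega> \<in> space Q" for \<omega>
  proof (rule antisym)
    show "\<psi> (S \<omega>) \<le> ereal (f \<omega>)"
    proof (rule ereal_le_epsilon2)
      fix e :: real assume "0 < e"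
      then obtain q :: rat where q: "f \<omega> < of_rat q" "of_rat q < f \<omega> + e"
        using of_rat_dense[of "f \<omega>" "f \<omega> + e"] by auto
      then have "S \<omega> \<in> B q" using B_vimage[of q] \<omega> by auto
      moreover have "\<psi> (S \<omega>) \<le> (if S \<omega> \<in> B q then ereal (of_rat q) else \<infinity>)"
        unfolding \<psi>_def by (rule INF_lower) simp
      ultimately have "\<psi> (S \<omega>) \<le> ereal (of_rat q)" by simp
      also have "\<dots> \<le> ereal (f \<omega>) + ereal e" using q by simp
      finally show "\<psi> (S \<omega>) \<le> ereal (f \<omega>) + ereal e" .
    qed
    show "ereal (f \<omega>) \<le> \<psi> (S \<omega>)"
      unfolding \<psi>_def
    proof (rule INF_greatest)
      fix r :: rat
      have "S \<omega> \<in> B r \<Longrightarrow> f \<omega> < of_rat r" using B_vimage[of r] \<omega> by blast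
      then show "ereal (f \<omega>) \<le> (if S \<omega> \<in> B r then ereal (of_rat r) else \<infinity>)"
        by (simp add: less_imp_le)
    qed
  qed
  then have "\<And>\<omega>. \<omega> \<in> space Q \<Longrightarrow> f \<omega> = real_of_ereal (\<psi> (S \<omega>))" by simp
  with \<phi>_meas show ?thesis by (rule that)
qed

section \<open>Distribution functions and the probability integral transform\<close>

lemma law_cdf_eq_cdf_distr:
  assumes "V \<in> borel_measurable P"
  shows "law_cdf P V = cdf (distr P borel V)"
  unfolding law_cdf_def cdf_def fun_eq_iff
  using assms by (subst measure_distr) (auto intro!: arg_cong[where f="measure P"])

lemma law_cdf_mono:
  assumes "prob_space P" "V \<in> borel_measurable P" "x \<le> y"
  shows "law_cdf P V x \<le> law_cdf P V y"
  unfolding law_cdf_def using assms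
  by (intro finite_measure.finite_measure_mono[OF prob_space.finite_measure]) auto

lemma mono_law_cdf: "prob_space P \<Longrightarrow> V \<in> borel_measurable P \<Longrightarrow> mono (law_cdf P V)"
  by (auto simp: mono_def intro: law_cdf_mono)

lemma borel_measurable_law_cdf:
  "prob_space P \<Longrightarrow> V \<in> borel_measurable P \<Longrightarrow> law_cdf P V \<in> borel_measurable borel"
  by (rule borel_measurable_mono) (rule mono_law_cdf)

lemma law_cdf_le_1: "prob_space P \<Longrightarrow> law_cdf P V x \<le> 1"
  unfolding law_cdf_def by (auto simp: prob_space.prob_le_1)

lemma measure_greater_law_cdf:
  assumes "prob_space P" "Y \<in> borel_measurable P"
  shows "measure P {\<omega>\<in>space P. s < Y \<omega>} = 1 - law_cdf P Y s"
proof -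
  have "{\<omega>\<in>space P. s < Y \<omega>} = space P - {\<omega>\<in>space P. Y \<omega> \<le> s}" by auto
  then show ?thesis unfolding law_cdf_def using assms by (simp add: prob_space.prob_compl)
qed

lemma interval_measure_law_cdf:
  assumes P: "prob_space P" and V[measurable]: "V \<in> borel_measurable P"
  shows "interval_measure (law_cdf P V) = distr P borel V"
proof -
  interpret P: prob_space P by fact
  let ?M = "distr P borel V"
  interpret M: real_distribution ?M by simp
  have mono: "mono (cdf ?M)" by (auto intro: monoI M.cdf_nondecreasing)
  have "interval_measure (cdf ?M) = ?M"
  proof (rule cdf_unique)
    show "real_distribution (interval_measure (cdf ?M))"
      using mono M.cdf_is_right_cont M.cdf_lim_at_bot M.cdf_lim_at_top_prob
      by (intro real_distribution_interval_measure) (auto dest: monoD)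
    show "cdf (interval_measure (cdf ?M)) = cdf ?M"
      using cdf_interval_measure[of "cdf ?M"] mono M.cdf_is_right_cont M.cdf_lim_at_bot
      by (auto dest: monoD)
  qed (fact M.real_distribution_axioms)
  then show ?thesis using law_cdf_eq_cdf_distr[OF V] by simp
qed

lemma continuous_law_cdf_sublevel_set:
  assumes P: "prob_space P" and V[measurable]: "V \<in> borel_measurable P"
    and cont: "continuous_on UNIV (law_cdf P V)" and "u < 1" and nonempty: "law_cdf P V t \<le> u"
  obtains s where "law_cdf P V s = u" "{t. law_cdf P V t \<le> u} = {..s}"
proof -
  interpret D: real_distribution "distr P borel V" using P by (simp add: prob_space.real_distribution_distr)
  let ?G = "law_cdf P V" and ?S = "{t. law_cdf P V t \<le> u}"
  have G: "?G = cdf (distr P borel V)" by (rule law_cdf_eq_cdf_distr[OF V])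
  have "(?G \<longlongrightarrow> 1) at_top" unfolding G by (rule D.cdf_lim_at_top_prob)
  from order_tendstoD(1)[OF this \<open>u < 1\<close>] obtain b where b: "\<And>t. t \<ge> b \<Longrightarrow> ?G t > u"
    by (auto simp: eventually_at_top_linorder)
  have bdd: "bdd_above ?S"
  proof (rule bdd_aboveI)
    fix t assume "t \<in> ?S"
    show "t \<le> b"
    proof (rule ccontr)
      assume "\<not> t \<le> b"
      then have "u < ?G t" by (intro b) simp
      with \<open>t \<in> ?S\<close> show False by simp
    qed
  qed
  have "closed ?S" by (rule closed_Collect_le[OF cont]) simp
  then have s_in: "Sup ?S \<in> ?S" using nonempty bdd by (intro closed_contains_Sup) auto
  have sublevel: "?S = {..Sup ?S}"
  proof (intro set_eqI iffI)
    fix t assume "t \<in> ?S" then show "t \<in> {..Sup ?S}" using bdd by (simp add: cSup_upper)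
  next
    fix t assume "t \<in> {..Sup ?S}"
    then have "?G t \<le> ?G (Sup ?S)" using law_cdf_mono[OF P V] by simp
    then show "t \<in> ?S" using s_in by simp
  qed
  have "u \<le> ?G (Sup ?S)"
  proof (rule ccontr)
    assume "\<not> u \<le> ?G (Sup ?S)"
    then have e: "0 < u - ?G (Sup ?S)" by simp
    have "isCont ?G (Sup ?S)" using cont by (simp add: continuous_on_eq_continuous_at)
    then obtain d where d: "0 < d" "\<And>t. dist t (Sup ?S) < d \<Longrightarrow> dist (?G t) (?G (Sup ?S)) < u - ?G (Sup ?S)"
      unfolding continuous_at_eps_delta using e by blast
    define t where "t = Sup ?S + d / 2"
    have "dist t (Sup ?S) < d" using d(1) unfolding t_def by (simp add: dist_real_def)
    then have "\<bar>?G t - ?G (Sup ?S)\<bar> < u - ?G (Sup ?S)" using d(2) by (simp add: dist_real_def)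
    then have t: "?G t < u" "t > Sup ?S" using d(1) unfolding t_def by (simp_all add: abs_less_iff)
    then have "t \<in> {..Sup ?S}" unfolding sublevel[symmetric] by simp
    then show False using t(2) by simp
  qed
  then have "?G (Sup ?S) = u" using s_in by simp
  then show ?thesis using sublevel by (rule that)
qed

theorem measure_law_cdf_le:
  assumes P: "prob_space P" and V[measurable]: "V \<in> borel_measurable P"
    and cont: "continuous_on UNIV (law_cdf P V)" and u: "0 \<le> u" "u < 1"
  shows "measure P {\<omega>\<in>space P. law_cdf P V (V \<omega>) \<le> u} = u"
proof (cases "\<exists>t. law_cdf P V t \<le> u")
  case True
  then obtain t where "law_cdf P V t \<le> u" by blast
  with assms obtain s where s: "law_cdf P V s = u" "{t. law_cdf P V t \<le> u} = {..s}"
    by (elim continuous_law_cdf_sublevel_set)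
  then have "{\<omega>\<in>space P. law_cdf P V (V \<omega>) \<le> u} = {\<omega>\<in>space P. V \<omega> \<le> s}" by blast
  then show ?thesis using s(1) by (simp add: law_cdf_def)
next
  case False
  interpret D: real_distribution "distr P borel V" using P by (simp add: prob_space.real_distribution_distr)
  have "(law_cdf P V \<longlongrightarrow> 0) at_bot"
    unfolding law_cdf_eq_cdf_distr[OF V] by (rule D.cdf_lim_at_bot)
  then have "\<not> 0 < u"
    using False by (metis eventually_happens' less_le_not_le order_tendstoD(2) trivial_limit_at_bot_linorder)
  then show ?thesis using False u by simp
qed

lemma AE_law_cdf_strictly_between:
  assumes P: "prob_space P" and V[measurable]: "V \<in> borel_measurable P"
    and cont: "continuous_on UNIV (law_cdf P V)"
  shows "AE \<omega> in P. 0 < law_cdf P V (V \<omega>) \<and> law_cdf P V (V \<omega>) < 1"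
proof -
  interpret P: prob_space P by fact
  let ?G = "law_cdf P V"
  have [measurable]: "?G \<in> borel_measurable borel" by (rule borel_measurable_law_cdf[OF P V])
  have "{\<omega>\<in>space P. ?G (V \<omega>) \<le> 0} \<in> null_sets P"
  proof (rule null_setsI)
    show "{\<omega>\<in>space P. ?G (V \<omega>) \<le> 0} \<in> sets P" by measurable
    then show "emeasure P {\<omega>\<in>space P. ?G (V \<omega>) \<le> 0} = 0"
      using measure_law_cdf_le[OF P V cont, of 0] by (simp add: P.emeasure_eq_measure)
  qed
  then have AE_pos: "AE \<omega> in P. 0 < ?G (V \<omega>)" by (rule AE_I') (auto simp: not_less)
  have "measure P {\<omega>\<in>space P. 1 \<le> ?G (V \<omega>)} \<le> 0 + e" if "0 < e" for e
  proof (cases "e < 1")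
    case True
    have "measure P {\<omega>\<in>space P. 1 \<le> ?G (V \<omega>)} \<le> measure P (space P - {\<omega>\<in>space P. ?G (V \<omega>) \<le> 1 - e})"
      using that by (intro P.finite_measure_mono) auto
    also have "\<dots> = e"
      using that True by (subst P.prob_compl) (auto simp: measure_law_cdf_le[OF P V cont])
    finally show ?thesis by simp
  next
    case False
    then show ?thesis using P.prob_le_1[of "{\<omega>\<in>space P. 1 \<le> ?G (V \<omega>)}"] by linarith
  qed
  then have "measure P {\<omega>\<in>space P. 1 \<le> ?G (V \<omega>)} = 0"
    using measure_nonneg[of P] by (meson antisym field_le_epsilon)
  have "{\<omega>\<in>space P. 1 \<le> ?G (V \<omega>)} \<in> null_sets P"
  proof (rule null_setsI)
    show "{\<omega>\<in>space P. 1 \<le> ?G (V \<omega>)} \<in> sets P" by measurable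
    then show "emeasure P {\<omega>\<in>space P. 1 \<le> ?G (V \<omega>)} = 0"
      using \<open>measure P _ = 0\<close> by (simp add: P.emeasure_eq_measure)
  qed
  then have "AE \<omega> in P. ?G (V \<omega>) < 1" by (rule AE_I') (auto simp: not_less)
  with AE_pos show ?thesis by eventually_elim simp
qed

section \<open>Quantile transform\<close>

locale quantile_transform =
  fixes P :: "'a measure" and V X :: "'a \<Rightarrow> real"
  assumes prob_space: "prob_space P" and V[measurable]: "V \<in> borel_measurable P"
    and continuous_law_cdf: "continuous_on UNIV (law_cdf P V)"
    and X[measurable]: "X \<in> borel_measurable P"
    and X_nonneg: "\<And>\<omega>. \<omega> \<in> space P \<Longrightarrow> 0 \<le> X \<omega>"
begin

definition quantile :: "real \<Rightarrow> real" where
  "quantile u = Inf {x. u \<le> law_cdf P X x}"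

text \<open>The map \<open>t \<mapsto> F\<^sub>X\<^sup>-\<^sup>1(F\<^sub>V(t))\<close>, set to \<open>0\<close> where \<open>F\<^sub>V(t) \<in> {0, 1}\<close> (a null set for \<open>V\<close>).\<close>
definition transform :: "real \<Rightarrow> real" where
  "transform t = (if 0 < law_cdf P V t \<and> law_cdf P V t < 1 then quantile (law_cdf P V t) else 0)"

interpretation distr_X: cdf_distribution "distr P borel X"
  using prob_space by (simp add: cdf_distribution_def prob_space.real_distribution_distr)

lemma quantile_eq_I: "quantile = distr_X.I"
  unfolding quantile_def law_cdf_eq_cdf_distr[OF X] ..

lemma le_law_cdf_iff_quantile_le: "0 < u \<Longrightarrow> u < 1 \<Longrightarrow> u \<le> law_cdf P X x \<longleftrightarrow> quantile u \<le> x"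
  unfolding quantile_eq_I law_cdf_eq_cdf_distr[OF X] by (rule distr_X.pseudoinverse)

lemma quantile_nonneg:
  assumes "0 < u" "u < 1"
  shows "0 \<le> quantile u"
proof (rule ccontr)
  assume "\<not> 0 \<le> quantile u"
  then have "{\<omega>\<in>space P. X \<omega> \<le> quantile u} = {}" using X_nonneg by force
  then have "law_cdf P X (quantile u) = 0" unfolding law_cdf_def by (metis measure_empty)
  moreover have "u \<le> law_cdf P X (quantile u)" using assms le_law_cdf_iff_quantile_le by blast
  ultimately show False using assms by simp
qed

lemma transform_nonneg: "0 \<le> transform t"
  unfolding transform_def using quantile_nonneg by auto

lemma mono_on_transform: "mono_on {t. 0 < law_cdf P V t \<and> law_cdf P V t < 1} transform"
proof (rule mono_onI)
  fix s t assume "s \<in> {t. 0 < law_cdf P V t \<and> law_cdf P V t < 1}" "t \<in> {t. 0 < law_cdf P V t \<and> law_cdf P V t < 1}" "s \<le> t"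
  moreover have "law_cdf P V s \<le> law_cdf P V t" using law_cdf_mono[OF prob_space V \<open>s \<le> t\<close>] .
  ultimately show "transform s \<le> transform t"
    using distr_X.mono_I unfolding transform_def quantile_eq_I by (auto simp: mono_on_def)
qed

lemma borel_measurable_transform[measurable]: "transform \<in> borel_measurable borel"
proof -
  have G: "law_cdf P V \<in> borel_measurable borel"
    by (rule borel_measurable_law_cdf[OF prob_space V])
  have "quantile \<in> borel_measurable (restrict_space borel {0<..<1})"
    unfolding quantile_eq_I by (rule distr_X.measurable_CI)
  then have Q: "(\<lambda>u. if u \<in> {0<..<1} then quantile u else 0) \<in> borel_measurable borel"
    by (subst measurable_restrict_space_iff[symmetric]) auto
  have "transform = (\<lambda>u. if u \<in> {0<..<1} then quantile u else 0) \<circ> law_cdf P V"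
    unfolding transform_def by (auto simp: fun_eq_iff)
  then show ?thesis using measurable_comp[OF G Q] by simp
qed

text \<open>By the probability integral transform, \<open>F\<^sub>V(V)\<close> is uniform on \<open>(0, 1)\<close>.\<close>
theorem law_cdf_transform:
  assumes Z[measurable]: "Z \<in> borel_measurable P" and Z_eq: "AE \<omega> in P. Z \<omega> = transform (V \<omega>)"
  shows "law_cdf P Z = law_cdf P X"
proof (rule ext)
  fix x
  let ?G = "law_cdf P V" and ?F = "law_cdf P X"
  have [measurable]: "?G \<in> borel_measurable borel" by (rule borel_measurable_law_cdf[OF prob_space V])
  have "law_cdf P Z x = measure P {\<omega>\<in>space P. Z \<omega> \<le> x}"
    by (simp add: law_cdf_def)
  also have "\<dots> = measure P {\<omega>\<in>space P. ?G (V \<omega>) \<le> ?F x}"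
  proof (rule measure_eq_AE)
    show "AE \<omega> in P. (\<omega> \<in> {\<omega> \<in> space P. Z \<omega> \<le> x}) = (\<omega> \<in> {\<omega> \<in> space P. ?G (V \<omega>) \<le> ?F x})"
      using Z_eq AE_law_cdf_strictly_between[OF prob_space V continuous_law_cdf]
    proof eventually_elim
      case (elim \<omega>)
      then have "Z \<omega> = quantile (?G (V \<omega>))" unfolding transform_def by simp
      then show ?case using elim(2) le_law_cdf_iff_quantile_le by auto
    qed
  qed (measurable, measurable)
  also have "\<dots> = ?F x"
  proof (cases "?F x < 1")
    case True
    show ?thesis using measure_law_cdf_le[OF prob_space V continuous_law_cdf _ True] by (simp add: law_cdf_def)
  next
    case False
    then have "?F x = 1" using law_cdf_le_1[OF prob_space] by (metis linorder_not_less order_antisym)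
    then show ?thesis using law_cdf_le_1[OF prob_space] prob_space.prob_space[OF prob_space] by simp
  qed
  finally show "law_cdf P Z x = ?F x" .
qed

end

section \<open>Rearrangement inequality\<close>

lemma bathtub_threshold:
  fixes c :: "'a \<Rightarrow> real"
  assumes P: "prob_space P" and c[measurable]: "c \<in> borel_measurable P" and c_int: "integrable P c"
    and A[measurable]: "A \<in> sets P" and B[measurable]: "B \<in> sets P"
    and AB: "measure P A = measure P B"
    and below: "AE \<omega> in P. \<omega> \<in> B \<longrightarrow> c \<omega> \<le> \<kappa>" and above: "AE \<omega> in P. \<omega> \<notin> B \<longrightarrow> \<kappa> \<le> c \<omega>"
  shows "(\<integral>\<omega>. c \<omega> * indicator B \<omega> \<partial>P) \<le> (\<integral>\<omega>. c \<omega> * indicator A \<omega> \<partial>P)"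
proof -
  interpret P: prob_space P by fact
  have iA: "integrable P (\<lambda>\<omega>. c \<omega> * indicator A \<omega>)"
    by (rule integrable_real_mult_indicator[OF _ c_int]) simp
  have iB: "integrable P (\<lambda>\<omega>. c \<omega> * indicator B \<omega>)"
    by (rule integrable_real_mult_indicator[OF _ c_int]) simp
  have iA1: "integrable P (indicator A :: _ \<Rightarrow> real)" using integrable_real_mult_indicator[OF A, of "\<lambda>_. 1"] by simp
  have iB1: "integrable P (indicator B :: _ \<Rightarrow> real)" using integrable_real_mult_indicator[OF B, of "\<lambda>_. 1"] by simp
  \<comment> \<open>\<open>(c - \<kappa>)(1\<^sub>A - 1\<^sub>B) \<ge> 0\<close> pointwise, and \<open>1\<^sub>A - 1\<^sub>B\<close> integrates to \<open>0\<close>\<close>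
  have "0 \<le> (\<integral>\<omega>. (c \<omega> * indicator A \<omega> - c \<omega> * indicator B \<omega>) - \<kappa> * (indicator A \<omega> - indicator B \<omega>) \<partial>P)"
  proof (rule integral_nonneg_AE)
    show "AE \<omega> in P. 0 \<le> c \<omega> * indicator A \<omega> - c \<omega> * indicator B \<omega> - \<kappa> * (indicator A \<omega> - indicator B \<omega>)"
      using below above by eventually_elim (auto simp: indicator_def algebra_simps)
  qed
  also have "\<dots> = (\<integral>\<omega>. c \<omega> * indicator A \<omega> \<partial>P) - (\<integral>\<omega>. c \<omega> * indicator B \<omega> \<partial>P)
     - \<kappa> * ((\<integral>\<omega>. indicator A \<omega> \<partial>P) - (\<integral>\<omega>. indicator B \<omega> \<partial>P))"
    using iA iB iA1 iB1 by (simp add: Bochner_Integration.integral_diff)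
  also have "(\<integral>\<omega>. indicator A \<omega> \<partial>P) - (\<integral>\<omega>. indicator B \<omega> \<partial>P) = (0::real)"
    using AB by simp
  finally show ?thesis by simp
qed

lemma bathtub_inequality:
  fixes c :: "'a \<Rightarrow> real"
  assumes P: "prob_space P" and c[measurable]: "c \<in> borel_measurable P" and c_int: "integrable P c"
    and c_nonneg: "\<And>\<omega>. \<omega> \<in> space P \<Longrightarrow> 0 \<le> c \<omega>"
    and A[measurable]: "A \<in> sets P" and B[measurable]: "B \<in> sets P"
    and AB: "measure P A = measure P B"
    and D: "AE \<omega> in P. \<omega> \<in> D" and D_sub: "D \<subseteq> space P"
    and opposite: "\<And>\<omega> \<omega>'. \<omega> \<in> D \<Longrightarrow> \<omega> \<in> B \<Longrightarrow> \<omega>' \<in> D \<Longrightarrow> \<omega>' \<notin> B \<Longrightarrow> c \<omega> \<le> c \<omega>'"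
  shows "(\<integral>\<omega>. c \<omega> * indicator B \<omega> \<partial>P) \<le> (\<integral>\<omega>. c \<omega> * indicator A \<omega> \<partial>P)"
proof (cases "D - B = {}")
  case True
  interpret P: prob_space P by fact
  have aeB: "AE \<omega> in P. \<omega> \<in> B" using D True by (auto elim!: eventually_mono)
  then have "measure P B = 1" using P.prob_eq_1 B by blast
  then have "measure P A = 1" using AB by simp
  then have aeA: "AE \<omega> in P. \<omega> \<in> A" using P.prob_eq_1 A by blast
  have "(\<integral>\<omega>. c \<omega> * indicator B \<omega> \<partial>P) \<le> (\<integral>\<omega>. c \<omega> \<partial>P)"
    using c_int c_nonneg integrable_real_mult_indicator[OF B c_int] by (intro integral_mono) (auto simp: indicator_def)
  also have "\<dots> = (\<integral>\<omega>. c \<omega> * indicator A \<omega> \<partial>P)"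
    by (rule integral_cong_AE) (use aeA in \<open>auto simp: indicator_def\<close>)
  finally show ?thesis .
next
  case False
  define \<kappa> where "\<kappa> = Inf (c ` (D - B))"
  have bdd: "bdd_below (c ` (D - B))"
    using c_nonneg D_sub by (intro bdd_belowI[of _ 0]) auto
  show ?thesis
  proof (rule bathtub_threshold[OF P c c_int A B AB, of \<kappa>])
    show "AE \<omega> in P. \<omega> \<in> B \<longrightarrow> c \<omega> \<le> \<kappa>"
      using D
    proof eventually_elim
      case (elim \<omega>)
      show ?case unfolding \<kappa>_def
        using False opposite[of \<omega>] elim by (auto intro!: cInf_greatest)
    qed
    show "AE \<omega> in P. \<omega> \<notin> B \<longrightarrow> \<kappa> \<le> c \<omega>"
      using D
    proof eventually_elim
      case (elim \<omega>)
      show ?case unfolding \<kappa>_def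
        using bdd elim by (auto intro!: cInf_lower)
    qed
  qed
qed

lemma nn_integral_layer_cake:
  fixes c Y :: "'a \<Rightarrow> real"
  assumes P: "prob_space P" and c[measurable]: "c \<in> borel_measurable P"
    and Y[measurable]: "Y \<in> borel_measurable P"
    and c_nonneg: "\<And>\<omega>. \<omega> \<in> space P \<Longrightarrow> 0 \<le> c \<omega>" and Y_nonneg: "\<And>\<omega>. \<omega> \<in> space P \<Longrightarrow> 0 \<le> Y \<omega>"
  shows "(\<integral>\<^sup>+\<omega>. ennreal (c \<omega> * Y \<omega>) \<partial>P) = (\<integral>\<^sup>+s. (\<integral>\<^sup>+\<omega>. ennreal (c \<omega>) * indicator {0..<Y \<omega>} s \<partial>P) \<partial>lborel)"
proof -
  interpret P: prob_space P by fact
  interpret PL: pair_sigma_finite P lborel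
    by (simp add: pair_sigma_finite_def P.sigma_finite_measure_axioms lborel.sigma_finite_measure_axioms)
  have eq: "(\<lambda>(\<omega>, s). ennreal (c \<omega>) * indicator {0..<Y \<omega>} s) =
      (\<lambda>p. ennreal (c (fst p)) * (if 0 \<le> snd p \<and> snd p < Y (fst p) then 1 else 0))"
    by (auto simp: fun_eq_iff indicator_def)
  have m: "(\<lambda>(\<omega>, s). ennreal (c \<omega>) * indicator {0..<Y \<omega>} s) \<in> borel_measurable (P \<Otimes>\<^sub>M lborel)"
    unfolding eq by measurable
  have "(\<integral>\<^sup>+s. (\<integral>\<^sup>+\<omega>. ennreal (c \<omega>) * indicator {0..<Y \<omega>} s \<partial>P) \<partial>lborel)
      = (\<integral>\<^sup>+\<omega>. (\<integral>\<^sup>+s. ennreal (c \<omega>) * indicator {0..<Y \<omega>} s \<partial>lborel) \<partial>P)"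
    by (rule PL.Fubini'[OF m])
  also have "\<dots> = (\<integral>\<^sup>+\<omega>. ennreal (c \<omega> * Y \<omega>) \<partial>P)"
  proof (rule nn_integral_cong)
    fix \<omega> assume \<omega>: "\<omega> \<in> space P"
    have "(\<integral>\<^sup>+s. ennreal (c \<omega>) * indicator {0..<Y \<omega>} s \<partial>lborel) = ennreal (c \<omega>) * emeasure lborel {0..<Y \<omega>}"
      by (rule nn_integral_cmult_indicator) simp
    also have "\<dots> = ennreal (c \<omega> * Y \<omega>)"
      using Y_nonneg[OF \<omega>] c_nonneg[OF \<omega>] by (simp add: ennreal_mult)
    finally show "(\<integral>\<^sup>+s. ennreal (c \<omega>) * indicator {0..<Y \<omega>} s \<partial>lborel) = ennreal (c \<omega> * Y \<omega>)" .
  qed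
  finally show ?thesis by simp
qed

lemma nn_integral_indicator_superlevel:
  fixes c W :: "'a \<Rightarrow> real"
  assumes "prob_space P" and [measurable]: "c \<in> borel_measurable P" "W \<in> borel_measurable P"
    and "integrable P c" "\<And>\<omega>. \<omega> \<in> space P \<Longrightarrow> 0 \<le> c \<omega>" "0 \<le> s"
  shows "(\<integral>\<^sup>+\<omega>. ennreal (c \<omega>) * indicator {0..<W \<omega>} s \<partial>P)
    = ennreal (\<integral>\<omega>. c \<omega> * indicator {\<omega>\<in>space P. s < W \<omega>} \<omega> \<partial>P)"
proof -
  have [measurable]: "{\<omega>\<in>space P. s < W \<omega>} \<in> sets P" by measurable
  have "(\<integral>\<^sup>+\<omega>. ennreal (c \<omega>) * indicator {0..<W \<omega>} s \<partial>P)
      = (\<integral>\<^sup>+\<omega>. ennreal (c \<omega> * indicator {\<omega>\<in>space P. s < W \<omega>} \<omega>) \<partial>P)"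
    by (rule nn_integral_cong) (use assms in \<open>auto simp: indicator_def\<close>)
  also have "\<dots> = ennreal (\<integral>\<omega>. c \<omega> * indicator {\<omega>\<in>space P. s < W \<omega>} \<omega> \<partial>P)"
    using assms by (intro nn_integral_eq_integral) (auto intro!: integrable_real_mult_indicator AE_I2)
  finally show ?thesis .
qed

text \<open>Among nonnegative \<open>Y\<close> with a given law, \<open>E[c Y]\<close> is smallest for \<open>Y\<close> ordered oppositely to \<open>c\<close>:
  by the layer cake formula it suffices to compare the superlevel sets, which is the bathtub inequality.\<close>
theorem nn_integral_rearrangement_le:
  fixes c Y Z :: "'a \<Rightarrow> real"
  assumes P: "prob_space P" and c[measurable]: "c \<in> borel_measurable P" and c_int: "integrable P c"
    and c_nonneg: "\<And>\<omega>. \<omega> \<in> space P \<Longrightarrow> 0 \<le> c \<omega>"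
    and Y[measurable]: "Y \<in> borel_measurable P" and Y_nonneg: "\<And>\<omega>. \<omega> \<in> space P \<Longrightarrow> 0 \<le> Y \<omega>"
    and Z[measurable]: "Z \<in> borel_measurable P" and Z_nonneg: "\<And>\<omega>. \<omega> \<in> space P \<Longrightarrow> 0 \<le> Z \<omega>"
    and law: "law_cdf P Y = law_cdf P Z"
    and D: "AE \<omega> in P. \<omega> \<in> D" "D \<subseteq> space P"
    and opposite: "\<And>\<omega> \<omega>'. \<omega> \<in> D \<Longrightarrow> \<omega>' \<in> D \<Longrightarrow> Z \<omega>' < Z \<omega> \<Longrightarrow> c \<omega> \<le> c \<omega>'"
  shows "(\<integral>\<^sup>+\<omega>. ennreal (c \<omega> * Z \<omega>) \<partial>P) \<le> (\<integral>\<^sup>+\<omega>. ennreal (c \<omega> * Y \<omega>) \<partial>P)"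
proof -
  have "(\<integral>\<^sup>+s. (\<integral>\<^sup>+\<omega>. ennreal (c \<omega>) * indicator {0..<Z \<omega>} s \<partial>P) \<partial>lborel)
     \<le> (\<integral>\<^sup>+s. (\<integral>\<^sup>+\<omega>. ennreal (c \<omega>) * indicator {0..<Y \<omega>} s \<partial>P) \<partial>lborel)"
  proof (rule nn_integral_mono)
    fix s :: real
    show "(\<integral>\<^sup>+\<omega>. ennreal (c \<omega>) * indicator {0..<Z \<omega>} s \<partial>P) \<le> (\<integral>\<^sup>+\<omega>. ennreal (c \<omega>) * indicator {0..<Y \<omega>} s \<partial>P)"
    proof (cases "0 \<le> s")
      case False
      then show ?thesis by (simp add: indicator_def)
    next
      case True
      let ?A = "{\<omega>\<in>space P. s < Y \<omega>}" and ?B = "{\<omega>\<in>space P. s < Z \<omega>}"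
      have "(\<integral>\<omega>. c \<omega> * indicator ?B \<omega> \<partial>P) \<le> (\<integral>\<omega>. c \<omega> * indicator ?A \<omega> \<partial>P)"
      proof (rule bathtub_inequality[OF P c c_int c_nonneg _ _ _ D])
        show "measure P ?A = measure P ?B"
          using measure_greater_law_cdf[OF P Y, of s] measure_greater_law_cdf[OF P Z, of s] law by simp
        fix \<omega> \<omega>' assume "\<omega> \<in> D" "\<omega> \<in> ?B" "\<omega>' \<in> D" "\<omega>' \<notin> ?B"
        then show "c \<omega> \<le> c \<omega>'" using opposite[of \<omega> \<omega>'] D(2) by auto
      qed measurable
      then show ?thesis
        using True by (simp add: nn_integral_indicator_superlevel[OF P] c_int c_nonneg)
    qed
  qed
  then show ?thesis
    using nn_integral_layer_cake[OF P c Y c_nonneg Y_nonneg] nn_integral_layer_cake[OF P c Z c_nonneg Z_nonneg]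
    by simp
qed

lemma integral_le_of_nn_integral_le:
  fixes Y Z :: "'a \<Rightarrow> real"
  assumes [measurable]: "Z \<in> borel_measurable M" and Y: "integrable M Y"
    and Y_nonneg: "\<And>\<omega>. \<omega> \<in> space M \<Longrightarrow> 0 \<le> Y \<omega>" and Z_nonneg: "\<And>\<omega>. \<omega> \<in> space M \<Longrightarrow> 0 \<le> Z \<omega>"
    and le: "(\<integral>\<^sup>+\<omega>. ennreal (Z \<omega>) \<partial>M) \<le> (\<integral>\<^sup>+\<omega>. ennreal (Y \<omega>) \<partial>M)"
  shows "(\<integral>\<omega>. Z \<omega> \<partial>M) \<le> (\<integral>\<omega>. Y \<omega> \<partial>M)"
proof -
  have Y_eq: "(\<integral>\<^sup>+\<omega>. ennreal (Y \<omega>) \<partial>M) = ennreal (\<integral>\<omega>. Y \<omega> \<partial>M)"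
    using Y Y_nonneg by (intro nn_integral_eq_integral) (auto intro: AE_I2)
  have "(\<integral>\<omega>. Z \<omega> \<partial>M) = enn2real (\<integral>\<^sup>+\<omega>. ennreal (Z \<omega>) \<partial>M)"
    using Z_nonneg by (intro integral_eq_nn_integral) (auto intro: AE_I2)
  also have "\<dots> \<le> enn2real (\<integral>\<^sup>+\<omega>. ennreal (Y \<omega>) \<partial>M)"
    using le Y_eq by (intro enn2real_mono) simp_all
  also have "\<dots> = (\<integral>\<omega>. Y \<omega> \<partial>M)"
    using Y_eq Y_nonneg by (simp add: integral_nonneg)
  finally show ?thesis .
qed

section \<open>Change of measure\<close>

lemma AE_transfer_null_sets:
  assumes "sets P = sets Q" "null_sets P = null_sets Q" "AE x in Q. R x"
  shows "AE x in P. R x"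
proof -
  from assms(3) obtain N where N: "N \<in> null_sets Q" "{x\<in>space Q. \<not> R x} \<subseteq> N"
    by (auto simp: eventually_ae_filter)
  have "space P = space Q" using assms(1) by (rule sets_eq_imp_space_eq)
  then show ?thesis using N assms(2) by (intro AE_I'[of N]) auto
qed

locale equivalent_prob_spaces =
  fixes Q P :: "'a measure"
  assumes prob_space_Q: "prob_space Q" and prob_space_P: "prob_space P"
    and sets_eq: "sets P = sets Q" and null_sets_eq: "null_sets P = null_sets Q"
begin

lemma space_eq: "space P = space Q"
  using sets_eq by (rule sets_eq_imp_space_eq)

lemma measurable_eq: "measurable P M = measurable Q M"
  using sets_eq by (rule measurable_cong_sets) simp

lemma borel_measurable_density_ratio[measurable]: "density_ratio Q P \<in> borel_measurable Q"
  unfolding density_ratio_def by measurable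

lemma AE_RN_deriv_eq_density_ratio: "AE \<omega> in Q. RN_deriv Q P \<omega> = ennreal (density_ratio Q P \<omega>)"
proof -
  interpret Q: prob_space Q by (rule prob_space_Q)
  have "absolutely_continuous Q P" unfolding absolutely_continuous_def using null_sets_eq by simp
  then have "AE \<omega> in Q. RN_deriv Q P \<omega> \<noteq> \<infinity>"
    using prob_space_P sets_eq by (intro Q.RN_deriv_finite) (auto simp: prob_space_imp_sigma_finite)
  then show ?thesis by eventually_elim (auto simp: density_ratio_def ennreal_enn2real_if)
qed

lemma nn_integral_density_ratio:
  assumes [measurable]: "f \<in> borel_measurable Q"
  shows "(\<integral>\<^sup>+\<omega>. f \<omega> \<partial>P) = (\<integral>\<^sup>+\<omega>. ennreal (density_ratio Q P \<omega>) * f \<omega> \<partial>Q)"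
proof -
  interpret Q: prob_space Q by (rule prob_space_Q)
  have "absolutely_continuous Q P" unfolding absolutely_continuous_def using null_sets_eq by simp
  then have "(\<integral>\<^sup>+\<omega>. f \<omega> \<partial>P) = (\<integral>\<^sup>+\<omega>. RN_deriv Q P \<omega> * f \<omega> \<partial>Q)"
    using sets_eq by (simp add: Q.RN_deriv_nn_integral)
  also have "\<dots> = (\<integral>\<^sup>+\<omega>. ennreal (density_ratio Q P \<omega>) * f \<omega> \<partial>Q)"
    by (rule nn_integral_cong_AE) (use AE_RN_deriv_eq_density_ratio in eventually_elim, auto)
  finally show ?thesis .
qed

lemma AE_density_ratio_pos: "AE \<omega> in Q. 0 < density_ratio Q P \<omega>"
proof -
  let ?N = "{\<omega>\<in>space Q. density_ratio Q P \<omega> \<le> 0}"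
  have N: "?N \<in> sets Q" by measurable
  have "emeasure P ?N = (\<integral>\<^sup>+\<omega>. indicator ?N \<omega> \<partial>P)"
    using N sets_eq by simp
  also have "\<dots> = (\<integral>\<^sup>+\<omega>. ennreal (density_ratio Q P \<omega>) * indicator ?N \<omega> \<partial>Q)"
    using N by (intro nn_integral_density_ratio) simp
  also have "\<dots> = 0"
    by (rule nn_integral_zero') (auto simp: indicator_def ennreal_eq_0_iff)
  finally have "?N \<in> null_sets P" using N sets_eq by auto
  then have "?N \<in> null_sets Q" using null_sets_eq by simp
  then show ?thesis by (rule AE_I') auto
qed

lemma nn_integral_divide_density_ratio:
  assumes [measurable]: "Y \<in> borel_measurable Q"
  shows "(\<integral>\<^sup>+\<omega>. ennreal (Y \<omega>) \<partial>Q) = (\<integral>\<^sup>+\<omega>. ennreal (Y \<omega> / density_ratio Q P \<omega>) \<partial>P)"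
proof -
  have "(\<integral>\<^sup>+\<omega>. ennreal (Y \<omega> / density_ratio Q P \<omega>) \<partial>P)
      = (\<integral>\<^sup>+\<omega>. ennreal (density_ratio Q P \<omega>) * ennreal (Y \<omega> / density_ratio Q P \<omega>) \<partial>Q)"
    by (intro nn_integral_density_ratio) measurable
  also have "\<dots> = (\<integral>\<^sup>+\<omega>. ennreal (Y \<omega>) \<partial>Q)"
  proof (rule nn_integral_cong_AE)
    show "AE \<omega> in Q. ennreal (density_ratio Q P \<omega>) * ennreal (Y \<omega> / density_ratio Q P \<omega>) = ennreal (Y \<omega>)"
      using AE_density_ratio_pos
    proof eventually_elim
      case (elim \<omega>)
      show ?case
      proof (cases "0 \<le> Y \<omega>")
        case True
        then show ?thesis using elim by (simp add: ennreal_mult[symmetric])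
      next
        case False
        then have "Y \<omega> / density_ratio Q P \<omega> \<le> 0" using elim by (simp add: divide_nonpos_pos)
        then show ?thesis using False by (simp add: ennreal_eq_0_iff ennreal_neg)
      qed
    qed
  qed
  finally show ?thesis by simp
qed

lemma integrable_inverse_density_ratio: "integrable P (\<lambda>\<omega>. 1 / density_ratio Q P \<omega>)"
proof (rule integrableI_nonneg)
  show "(\<lambda>\<omega>. 1 / density_ratio Q P \<omega>) \<in> borel_measurable P"
    unfolding measurable_eq by measurable
  show "AE \<omega> in P. 0 \<le> 1 / density_ratio Q P \<omega>" by (simp add: density_ratio_def)
  have "(\<integral>\<^sup>+\<omega>. ennreal (1 / density_ratio Q P \<omega>) \<partial>P) = (\<integral>\<^sup>+\<omega>. ennreal 1 \<partial>Q)"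
    using nn_integral_divide_density_ratio[of "\<lambda>_. 1"] by simp
  also have "\<dots> = 1" using prob_space.emeasure_space_1[OF prob_space_Q] by simp
  finally show "(\<integral>\<^sup>+\<omega>. ennreal (1 / density_ratio Q P \<omega>) \<partial>P) < \<infinity>" by simp
qed

end

section \<open>First order dominance of monotone transforms\<close>

text \<open>Bounded non-decreasing approximations of \<open>f \<circ> h\<close>, where \<open>h\<close> is only monotone on
  \<open>{0 < G < 1}\<close>.  They are needed because the dominance hypothesis only applies to functions that
  are integrable under both laws, which \<open>f \<circ> h\<close> need not be.\<close>
definition truncated_comp :: "(real \<Rightarrow> real) \<Rightarrow> (real \<Rightarrow> real) \<Rightarrow> (real \<Rightarrow> real) \<Rightarrow> nat \<Rightarrow> real \<Rightarrow> real" where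
  "truncated_comp G h f n t =
    (if G t \<le> 0 then f 0 else if G t < 1 then min (f (h t)) (max (real n) (f 0)) else max (real n) (f 0))"

lemma mono_truncated_comp:
  fixes G h f :: "real \<Rightarrow> real"
  assumes G: "mono G" and f: "mono f" and h_nonneg: "\<And>t. 0 \<le> h t"
    and h: "mono_on {t. 0 < G t \<and> G t < 1} h"
  shows "mono (truncated_comp G h f n)"
proof (rule monoI)
  fix s t :: real assume "s \<le> t"
  have Gst: "G s \<le> G t" using G \<open>s \<le> t\<close> by (rule monoD)
  have f0: "f 0 \<le> f (h u)" for u using f h_nonneg by (simp add: monoD)
  show "truncated_comp G h f n s \<le> truncated_comp G h f n t"
  proof (cases "0 < G s \<and> G t < 1")
    case True
    then have "h s \<le> h t" using Gst \<open>s \<le> t\<close> by (intro mono_onD[OF h]) auto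
    then have "f (h s) \<le> f (h t)" using f by (simp add: monoD)
    then show ?thesis using True Gst by (auto simp: truncated_comp_def)
  next
    case False
    then show ?thesis using Gst f0[of t] by (auto simp: truncated_comp_def)
  qed
qed

lemma abs_truncated_comp_le:
  fixes G h f :: "real \<Rightarrow> real"
  assumes "mono f" "\<And>t. 0 \<le> h t"
  shows "\<bar>truncated_comp G h f n t\<bar> \<le> \<bar>f 0\<bar> + real n"
  using monoD[OF assms(1) assms(2)[of t]] by (auto simp: truncated_comp_def)

lemma integral_truncated_comp_tendsto:
  fixes M :: "'a measure" and L Z :: "'a \<Rightarrow> real" and G h f :: "real \<Rightarrow> real"
  assumes M: "prob_space M" and [measurable]: "L \<in> borel_measurable M" "Z \<in> borel_measurable M"
    and G: "mono G" and f: "mono f" and h_nonneg: "\<And>t. 0 \<le> h t"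
    and h: "mono_on {t. 0 < G t \<and> G t < 1} h"
    and f_int: "integrable M (\<lambda>\<omega>. f (Z \<omega>))"
    and Z_eq: "AE \<omega> in M. 0 < G (L \<omega>) \<and> G (L \<omega>) < 1 \<and> Z \<omega> = h (L \<omega>)"
  shows "(\<lambda>n. \<integral>\<omega>. truncated_comp G h f n (L \<omega>) \<partial>M) \<longlonglongrightarrow> (\<integral>\<omega>. f (Z \<omega>) \<partial>M)"
proof (rule integral_dominated_convergence[where w="\<lambda>\<omega>. \<bar>f (Z \<omega>)\<bar> + \<bar>f 0\<bar>"])
  interpret M: prob_space M by fact
  have [measurable]: "f \<in> borel_measurable borel" using f by (rule borel_measurable_mono)
  show "(\<lambda>\<omega>. f (Z \<omega>)) \<in> borel_measurable M" by measurable
  show "integrable M (\<lambda>\<omega>. \<bar>f (Z \<omega>)\<bar> + \<bar>f 0\<bar>)" using f_int by simp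
  fix n
  have "mono (truncated_comp G h f n)" using G f h_nonneg h by (rule mono_truncated_comp)
  then have [measurable]: "truncated_comp G h f n \<in> borel_measurable borel" by (rule borel_measurable_mono)
  show "(\<lambda>\<omega>. truncated_comp G h f n (L \<omega>)) \<in> borel_measurable M" by measurable
  show "AE \<omega> in M. norm (truncated_comp G h f n (L \<omega>)) \<le> \<bar>f (Z \<omega>)\<bar> + \<bar>f 0\<bar>"
    using Z_eq
  proof eventually_elim
    case (elim \<omega>)
    have "f 0 \<le> f (Z \<omega>)" using f h_nonneg elim by (simp add: monoD)
    then show ?case using elim by (auto simp: truncated_comp_def)
  qed
next
  show "AE \<omega> in M. (\<lambda>n. truncated_comp G h f n (L \<omega>)) \<longlonglongrightarrow> f (Z \<omega>)"
    using Z_eq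
  proof eventually_elim
    case (elim \<omega>)
    obtain N :: nat where N: "f (Z \<omega>) \<le> real N" using real_arch_simple by blast
    have "eventually (\<lambda>n. truncated_comp G h f n (L \<omega>) = f (Z \<omega>)) sequentially"
      unfolding eventually_sequentially
    proof (intro exI allI impI)
      fix n assume "N \<le> n"
      then have "f (Z \<omega>) \<le> real n" using N by (meson of_nat_le_iff order_trans)
      then show "truncated_comp G h f n (L \<omega>) = f (Z \<omega>)" using elim by (auto simp: truncated_comp_def)
    qed
    then show ?case by (rule tendsto_eventually)
  qed
qed

lemma integral_interval_measure_law_cdf:
  fixes f :: "real \<Rightarrow> real"
  assumes "prob_space P" "V \<in> borel_measurable P" "f \<in> borel_measurable borel"
  shows "integrable (interval_measure (law_cdf P V)) f \<longleftrightarrow> integrable P (\<lambda>\<omega>. f (V \<omega>))"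
    and "(\<integral>x. f x \<partial>interval_measure (law_cdf P V)) = (\<integral>\<omega>. f (V \<omega>) \<partial>P)"
  unfolding interval_measure_law_cdf[OF assms(1,2)]
  by (rule integrable_distr_eq[OF assms(2,3)], rule integral_distr[OF assms(2,3)])

theorem stoch_le_FSD_transform:
  fixes P P' :: "'a measure" and L Z :: "'a \<Rightarrow> real" and G h :: "real \<Rightarrow> real"
  assumes P: "prob_space P" and P': "prob_space P'"
    and L[measurable]: "L \<in> borel_measurable P" and L'[measurable]: "L \<in> borel_measurable P'"
    and Z[measurable]: "Z \<in> borel_measurable P" and Z'[measurable]: "Z \<in> borel_measurable P'"
    and G: "mono G" and h_nonneg: "\<And>t. 0 \<le> h t" and h: "mono_on {t. 0 < G t \<and> G t < 1} h"
    and Z_eq: "AE \<omega> in P. 0 < G (L \<omega>) \<and> G (L \<omega>) < 1 \<and> Z \<omega> = h (L \<omega>)"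
    and Z_eq': "AE \<omega> in P'. 0 < G (L \<omega>) \<and> G (L \<omega>) < 1 \<and> Z \<omega> = h (L \<omega>)"
    and L_le: "stoch_le F_FSD (law_cdf P L) (law_cdf P' L)"
  shows "stoch_le F_FSD (law_cdf P Z) (law_cdf P' Z)"
  unfolding stoch_le_def
proof (intro ballI impI)
  fix f assume "f \<in> F_FSD"
  then have f: "mono f" by (simp add: F_FSD_def)
  then have f_meas[measurable]: "f \<in> borel_measurable borel" by (rule borel_measurable_mono)
  assume "integrable (interval_measure (law_cdf P Z)) f" "integrable (interval_measure (law_cdf P' Z)) f"
  then have f_int: "integrable P (\<lambda>\<omega>. f (Z \<omega>))" "integrable P' (\<lambda>\<omega>. f (Z \<omega>))"
    using integral_interval_measure_law_cdf(1)[OF P Z f_meas]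
      integral_interval_measure_law_cdf(1)[OF P' Z' f_meas] by auto
  have "(\<integral>\<omega>. truncated_comp G h f n (L \<omega>) \<partial>P) \<le> (\<integral>\<omega>. truncated_comp G h f n (L \<omega>) \<partial>P')" for n
  proof -
    have "mono (truncated_comp G h f n)" using G f h_nonneg h by (rule mono_truncated_comp)
    then have FSD: "truncated_comp G h f n \<in> F_FSD" and [measurable]: "truncated_comp G h f n \<in> borel_measurable borel"
      by (simp_all add: F_FSD_def borel_measurable_mono)
    have "integrable M (\<lambda>\<omega>. truncated_comp G h f n (L \<omega>))" if "prob_space M" "L \<in> borel_measurable M" for M
      using that abs_truncated_comp_le[OF f h_nonneg]
      by (intro finite_measure.integrable_const_bound[where B="\<bar>f 0\<bar> + real n"])
        (auto simp: prob_space.finite_measure)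
    then show ?thesis
      using L_le FSD P P' unfolding stoch_le_def by (simp add: integral_interval_measure_law_cdf)
  qed
  moreover have "(\<lambda>n. \<integral>\<omega>. truncated_comp G h f n (L \<omega>) \<partial>P) \<longlonglongrightarrow> (\<integral>\<omega>. f (Z \<omega>) \<partial>P)"
    "(\<lambda>n. \<integral>\<omega>. truncated_comp G h f n (L \<omega>) \<partial>P') \<longlonglongrightarrow> (\<integral>\<omega>. f (Z \<omega>) \<partial>P')"
    using integral_truncated_comp_tendsto[OF P L Z G f h_nonneg h f_int(1) Z_eq]
      integral_truncated_comp_tendsto[OF P' L' Z' G f h_nonneg h f_int(2) Z_eq'] by auto
  ultimately have "(\<integral>\<omega>. f (Z \<omega>) \<partial>P) \<le> (\<integral>\<omega>. f (Z \<omega>) \<partial>P')" by (intro LIMSEQ_le) auto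
  then show "(\<integral>x. f x \<partial>interval_measure (law_cdf P Z)) \<le> (\<integral>x. f x \<partial>interval_measure (law_cdf P' Z))"
    using P P' by (simp add: integral_interval_measure_law_cdf)
qed

section \<open>Cost-efficient counterparts and the robust problem\<close>

lemma payoffD:
  assumes "payoff Q S X" and S[measurable]: "S \<in> borel_measurable Q" and S_nonneg: "\<forall>\<omega>\<in>space Q. 0 \<le> S \<omega>"
  shows "X \<in> borel_measurable Q" "\<And>\<omega>. \<omega> \<in> space Q \<Longrightarrow> 0 \<le> X \<omega>" "integrable Q X"
proof -
  from assms(1) obtain g where g[measurable]: "g \<in> borel_measurable borel"
    and "\<forall>x\<ge>0. 0 \<le> g x" "X = (\<lambda>\<omega>. g (S \<omega>))" "integrable Q X"
    unfolding payoff_def by blast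
  then show "X \<in> borel_measurable Q" "\<And>\<omega>. \<omega> \<in> space Q \<Longrightarrow> 0 \<le> X \<omega>" "integrable Q X"
    using S_nonneg by auto
qed

locale least_favorable_setting = equivalent_prob_spaces Q Pst
  for Q Pst :: "'a measure" +
  fixes S :: "'a \<Rightarrow> real"
  assumes S[measurable]: "S \<in> borel_measurable Q" and S_nonneg: "\<forall>\<omega>\<in>space Q. 0 \<le> S \<omega>"
    and sets_Q: "sets Q = sets (vimage_algebra (space Q) S borel)"
    and continuous_law_cdf: "continuous_on UNIV (law_cdf Pst (density_ratio Q Pst))"
begin

abbreviation "ell \<equiv> density_ratio Q Pst"
abbreviation "G \<equiv> law_cdf Pst ell"

lemma borel_measurable_density_ratio_P[measurable]: "ell \<in> borel_measurable Pst"
  unfolding measurable_eq by (rule borel_measurable_density_ratio)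

lemma mono_G: "mono G"
  using prob_space_P by (rule mono_law_cdf) simp

lemma AE_G_strictly_between: "AE \<omega> in Pst. 0 < G (ell \<omega>) \<and> G (ell \<omega>) < 1"
  using prob_space_P continuous_law_cdf by (intro AE_law_cdf_strictly_between) simp_all

text \<open>The witness is \<open>F\<^sub>X\<^sup>-\<^sup>1(G(\<ell>))\<close>, a function of \<open>S\<close> because \<open>\<ell>\<close> is.\<close>
lemma comonotone_payoff_exists:
  assumes X: "payoff Q S X"
  obtains g h where "g \<in> borel_measurable borel" "\<And>x. 0 \<le> g x"
    "law_cdf Pst (\<lambda>\<omega>. g (S \<omega>)) = law_cdf Pst X"
    "\<And>t. 0 \<le> h t" "mono_on {t. 0 < G t \<and> G t < 1} h" "\<And>\<omega>. \<omega> \<in> space Q \<Longrightarrow> g (S \<omega>) = h (ell \<omega>)"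
proof -
  obtain \<phi> where \<phi>[measurable]: "\<phi> \<in> borel_measurable borel" and ell_eq: "\<And>\<omega>. \<omega> \<in> space Q \<Longrightarrow> ell \<omega> = \<phi> (S \<omega>)"
    using vimage_algebra_measurable_factor[OF sets_Q borel_measurable_density_ratio] by blast
  note X_props = payoffD[OF X S S_nonneg]
  have "X \<in> borel_measurable Pst" using X_props(1) unfolding measurable_eq .
  moreover have "\<And>\<omega>. \<omega> \<in> space Pst \<Longrightarrow> 0 \<le> X \<omega>" using X_props(2) space_eq by simp
  ultimately interpret qt: quantile_transform Pst ell X
    by (intro quantile_transform.intro prob_space_P borel_measurable_density_ratio_P continuous_law_cdf)
  have [measurable]: "(\<lambda>\<omega>. qt.transform (\<phi> (S \<omega>))) \<in> borel_measurable Pst"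
    unfolding measurable_eq by measurable
  have "law_cdf Pst (\<lambda>\<omega>. (qt.transform \<circ> \<phi>) (S \<omega>)) = law_cdf Pst X"
    using ell_eq space_eq by (auto intro!: qt.law_cdf_transform AE_I2)
  then show ?thesis
    using ell_eq qt.transform_nonneg qt.mono_on_transform by (intro that[of "qt.transform \<circ> \<phi>"]) auto
qed

text \<open>\<open>E\<^sub>Q[Z] = E\<^sub>P\<^sup>*[Z/\<ell>]\<close>, and \<open>1/\<ell>\<close> is ordered oppositely to a \<open>Z\<close> comonotone with \<open>\<ell>\<close>.\<close>
lemma nn_integral_comonotone_le:
  assumes Z[measurable]: "Z \<in> borel_measurable Q" and Z_nonneg: "\<And>\<omega>. \<omega> \<in> space Q \<Longrightarrow> 0 \<le> Z \<omega>"
    and h: "mono_on {t. 0 < G t \<and> G t < 1} h" and Z_eq: "\<And>\<omega>. \<omega> \<in> space Q \<Longrightarrow> Z \<omega> = h (ell \<omega>)"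
    and Y[measurable]: "Y \<in> borel_measurable Q" and Y_nonneg: "\<And>\<omega>. \<omega> \<in> space Q \<Longrightarrow> 0 \<le> Y \<omega>"
    and law: "law_cdf Pst Y = law_cdf Pst Z"
  shows "(\<integral>\<^sup>+\<omega>. ennreal (Z \<omega>) \<partial>Q) \<le> (\<integral>\<^sup>+\<omega>. ennreal (Y \<omega>) \<partial>Q)"
proof -
  let ?c = "\<lambda>\<omega>. 1 / ell \<omega>"
  define D where "D = {\<omega>\<in>space Pst. 0 < ell \<omega> \<and> 0 < G (ell \<omega>) \<and> G (ell \<omega>) < 1}"
  have "AE \<omega> in Pst. 0 < ell \<omega>"
    using sets_eq null_sets_eq AE_density_ratio_pos by (rule AE_transfer_null_sets)
  then have D: "AE \<omega> in Pst. \<omega> \<in> D"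
    using AE_G_strictly_between AE_space unfolding D_def by eventually_elim auto
  have opposite: "?c \<omega> \<le> ?c \<omega>'" if "\<omega> \<in> D" "\<omega>' \<in> D" "Z \<omega>' < Z \<omega>" for \<omega> \<omega>'
  proof -
    have "ell \<omega>' \<le> ell \<omega>"
    proof (rule ccontr)
      assume "\<not> ell \<omega>' \<le> ell \<omega>"
      then have "h (ell \<omega>) \<le> h (ell \<omega>')" using that by (intro mono_onD[OF h]) (auto simp: D_def)
      then show False using that Z_eq space_eq by (auto simp: D_def)
    qed
    then show ?thesis using that by (auto simp: D_def intro!: divide_left_mono)
  qed
  have c_meas: "?c \<in> borel_measurable Pst" by measurable
  have c_nonneg: "0 \<le> ?c \<omega>" for \<omega> by (simp add: density_ratio_def)
  have "Y \<in> borel_measurable Pst" "Z \<in> borel_measurable Pst" unfolding measurable_eq by (fact Y Z)+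
  moreover have "\<omega> \<in> space Pst \<Longrightarrow> 0 \<le> Y \<omega>" "\<omega> \<in> space Pst \<Longrightarrow> 0 \<le> Z \<omega>" for \<omega>
    using Y_nonneg Z_nonneg space_eq by simp_all
  moreover have "D \<subseteq> space Pst" unfolding D_def by blast
  ultimately have "(\<integral>\<^sup>+\<omega>. ennreal (?c \<omega> * Z \<omega>) \<partial>Pst) \<le> (\<integral>\<^sup>+\<omega>. ennreal (?c \<omega> * Y \<omega>) \<partial>Pst)"
    using nn_integral_rearrangement_le[OF prob_space_P c_meas integrable_inverse_density_ratio c_nonneg]
      law D opposite by blast
  then show ?thesis by (simp add: nn_integral_divide_density_ratio)
qed

lemma stoch_le_FSD_comonotone:
  assumes Z[measurable]: "Z \<in> borel_measurable Q"
    and h: "\<And>t. 0 \<le> h t" "mono_on {t. 0 < G t \<and> G t < 1} h"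
    and Z_eq: "\<And>\<omega>. \<omega> \<in> space Q \<Longrightarrow> Z \<omega> = h (ell \<omega>)"
    and P: "equivalent_prob_spaces Q P" and dominance: "stoch_le F_FSD (law_cdf Pst ell) (law_cdf P ell)"
  shows "stoch_le F_FSD (law_cdf Pst Z) (law_cdf P Z)"
proof -
  interpret P: equivalent_prob_spaces Q P by (fact P)
  have Z_eq_Pst: "AE \<omega> in Pst. 0 < G (ell \<omega>) \<and> G (ell \<omega>) < 1 \<and> Z \<omega> = h (ell \<omega>)"
    using AE_G_strictly_between AE_space by eventually_elim (use Z_eq space_eq in auto)
  then have "AE \<omega> in Q. 0 < G (ell \<omega>) \<and> G (ell \<omega>) < 1 \<and> Z \<omega> = h (ell \<omega>)"
    by (rule AE_transfer_null_sets[OF sets_eq[symmetric] null_sets_eq[symmetric]])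
  then have Z_eq_P: "AE \<omega> in P. 0 < G (ell \<omega>) \<and> G (ell \<omega>) < 1 \<and> Z \<omega> = h (ell \<omega>)"
    by (rule AE_transfer_null_sets[OF P.sets_eq P.null_sets_eq])
  have "ell \<in> borel_measurable P" "Z \<in> borel_measurable Pst" "Z \<in> borel_measurable P"
    unfolding P.measurable_eq measurable_eq by measurable
  then show ?thesis
    using stoch_le_FSD_transform[OF prob_space_P P.prob_space_P borel_measurable_density_ratio_P]
      mono_G h Z_eq_Pst Z_eq_P dominance by blast
qed

theorem cost_efficient_counterpart:
  assumes X: "payoff Q S X"
  obtains Z where "cost_efficient r T Q S Pst Z" "law_cdf Pst Z = law_cdf Pst X"
    "\<And>P. equivalent_prob_spaces Q P \<Longrightarrow> stoch_le F_FSD (law_cdf Pst ell) (law_cdf P ell) \<Longrightarrow>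
      stoch_le F_FSD (law_cdf Pst Z) (law_cdf P Z)"
proof -
  obtain g h where g[measurable]: "g \<in> borel_measurable borel" and g_nonneg: "\<And>x. 0 \<le> g x"
    and law_g: "law_cdf Pst (\<lambda>\<omega>. g (S \<omega>)) = law_cdf Pst X"
    and h: "\<And>t. 0 \<le> h t" "mono_on {t. 0 < G t \<and> G t < 1} h"
    and gh: "\<And>\<omega>. \<omega> \<in> space Q \<Longrightarrow> g (S \<omega>) = h (ell \<omega>)"
    using comonotone_payoff_exists[OF X] by blast
  define Z where "Z = (\<lambda>\<omega>. g (S \<omega>))"
  have Z_meas[measurable]: "Z \<in> borel_measurable Q" unfolding Z_def by measurable
  have Z_nonneg: "0 \<le> Z \<omega>" for \<omega> by (simp add: Z_def g_nonneg)
  have Z_eq: "\<And>\<omega>. \<omega> \<in> space Q \<Longrightarrow> Z \<omega> = h (ell \<omega>)" using gh by (simp add: Z_def)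
  have law: "law_cdf Pst Z = law_cdf Pst X" using law_g by (simp add: Z_def)
  have cheapest: "(\<integral>\<^sup>+\<omega>. ennreal (Z \<omega>) \<partial>Q) \<le> (\<integral>\<^sup>+\<omega>. ennreal (Y \<omega>) \<partial>Q)"
    if "payoff Q S Y" "law_cdf Pst Y = law_cdf Pst Z" for Y
    using nn_integral_comonotone_le[OF Z_meas Z_nonneg h(2) Z_eq payoffD(1,2)[OF that(1) S S_nonneg] that(2)] .
  note X_props = payoffD[OF X S S_nonneg]
  have "(\<integral>\<^sup>+\<omega>. ennreal (X \<omega>) \<partial>Q) = ennreal (\<integral>\<omega>. X \<omega> \<partial>Q)"
    using X_props by (intro nn_integral_eq_integral) (auto intro: AE_I2)
  then have "(\<integral>\<^sup>+\<omega>. ennreal (Z \<omega>) \<partial>Q) < \<infinity>"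
    using cheapest[OF X law[symmetric]] by (simp add: le_less_trans)
  then have "integrable Q Z" using Z_nonneg by (intro integrableI_nonneg) simp_all
  then have Z_payoff: "payoff Q S Z" unfolding payoff_def Z_def using g g_nonneg by blast
  have "cost_efficient r T Q S Pst Z"
    unfolding cost_efficient_def price_def
  proof (intro conjI allI impI Z_payoff mult_left_mono)
    fix Y assume Y: "payoff Q S Y \<and> law_cdf Pst Y = law_cdf Pst Z"
    note Y_props = payoffD[OF conjunct1[OF Y] S S_nonneg]
    show "(\<integral>\<omega>. Z \<omega> \<partial>Q) \<le> (\<integral>\<omega>. Y \<omega> \<partial>Q)"
      using Z_meas Y_props(3,2) Z_nonneg cheapest[OF conjunct1[OF Y] conjunct2[OF Y]]
      by (rule integral_le_of_nn_integral_le)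
  qed simp
  then show ?thesis
    using law stoch_le_FSD_comonotone[OF Z_meas h Z_eq] by (rule that)
qed

end

lemma unique_robust_solution_AE_eq:
  assumes sol: "unique_robust_solution Q YY Ps W Xt" and Z: "Z \<in> YY"
    and Pst: "Pst \<in> Ps" and W_eq: "W Pst Z = W Pst Xt" and W_le: "\<forall>P\<in>Ps. W Pst Z \<le> W P Z"
  shows "AE \<omega> in Q. Z \<omega> = Xt \<omega>"
proof -
  have "robust_value Ps W Xt \<le> ereal (W Pst Xt)"
    unfolding robust_value_def using Pst by (rule INF_lower)
  also have "\<dots> \<le> robust_value Ps W Z"
    unfolding robust_value_def using W_eq W_le by (auto intro!: INF_greatest)
  finally have "robust_value Ps W Z = robust_value Ps W Xt"
    using sol Z unfolding unique_robust_solution_def by (blast intro: antisym)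
  then show ?thesis using sol Z unfolding unique_robust_solution_def by blast
qed

theorem mainTheorem13:
  fixes T r S0 x0 :: real
    and Q :: "'a measure" and S :: "'a \<Rightarrow> real"
    and Ps :: "'a measure set" and Pst :: "'a measure"
    and W :: "'a measure \<Rightarrow> ('a \<Rightarrow> real) \<Rightarrow> real"
    and Xt :: "'a \<Rightarrow> real"
  assumes T_pos: "T > 0" and S0_pos: "S0 > 0"
    and Q_prob: "prob_space Q"
    and S_meas: "S \<in> borel_measurable Q"
    and S_nonneg: "\<forall>\<omega>\<in>space Q. 0 \<le> S \<omega>"
    and F_sigma: "sets Q = sets (vimage_algebra (space Q) S borel)"
    and Ps_prob: "\<forall>P\<in>Ps. prob_space P \<and> sets P = sets Q"
    and Ps_equiv_Q: "\<forall>P\<in>Ps. null_sets P = null_sets Q"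
    and Ps_equiv: "\<forall>P\<in>Ps. \<forall>P'\<in>Ps. null_sets P = null_sets P'"
    and x0_pos: "x0 > 0"
    and C2_comp: "composition_consistent F_FSD"
    and C2_cost: "cost_consistent F_FSD r T Q S Ps"
    and C3: "least_favorable F_FSD Q Ps Pst"
    and C4_cont: "continuous_on UNIV (law_cdf Pst (density_ratio Q Pst))"
    and C4_var: "integrable Pst (\<lambda>\<omega>. (1 / density_ratio Q Pst \<omega>)\<^sup>2)"
    and W_law_inv: "law_invariant_family Q S Ps W"
    and W_fam_cons: "family_consistent F_FSD Ps W (family_budget_set r T Q S Ps W x0) Pst"
    and unique_sol: "unique_robust_solution Q (family_budget_set r T Q S Ps W x0) Ps W Xt"
  shows "cost_efficient r T Q S Pst Xt"
proof (rule ccontr)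
  assume not_efficient: "\<not> cost_efficient r T Q S Pst Xt"
  let ?YY = "family_budget_set r T Q S Ps W x0"
  have Pst: "Pst \<in> Ps" using C3 unfolding least_favorable_def by (rule conjunct1)
  have equiv: "equivalent_prob_spaces Q P" if "P \<in> Ps" for P
    using Q_prob Ps_prob Ps_equiv_Q that by (simp add: equivalent_prob_spaces_def)
  interpret least_favorable_setting Q Pst S
    by (intro least_favorable_setting.intro least_favorable_setting_axioms.intro
        equiv[OF Pst] S_meas S_nonneg F_sigma C4_cont)
  have "Xt \<in> ?YY" using unique_sol unfolding unique_robust_solution_def by (rule conjunct1)
  then have Xt: "payoff Q S Xt" "price r T Q Xt \<le> x0"
    using Pst unfolding family_budget_set_def budget_set_def by auto
  from not_efficient Xt(1) obtain Y where Y: "payoff Q S Y" "law_cdf Pst Y = law_cdf Pst Xt"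
    and cheaper: "price r T Q Y < price r T Q Xt"
    unfolding cost_efficient_def by (auto simp: not_le)
  obtain Z where Z: "cost_efficient r T Q S Pst Z" "law_cdf Pst Z = law_cdf Pst Xt"
    and dominance: "\<And>P. equivalent_prob_spaces Q P \<Longrightarrow> stoch_le F_FSD (law_cdf Pst ell) (law_cdf P ell) \<Longrightarrow>
      stoch_le F_FSD (law_cdf Pst Z) (law_cdf P Z)"
    using cost_efficient_counterpart[where r=r and T=T, OF Xt(1)] by blast
  have Z_payoff: "payoff Q S Z" using Z(1) unfolding cost_efficient_def by (rule conjunct1)
  have "law_cdf Pst Y = law_cdf Pst Z" using Y(2) Z(2) by simp
  then have "price r T Q Z \<le> price r T Q Y" using Z(1) Y(1) unfolding cost_efficient_def by blast
  with cheaper have Z_cheaper: "price r T Q Z < price r T Q Xt" by simp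
  have Z_in: "Z \<in> ?YY"
    using Z_payoff Z_cheaper Xt(2) Reals_of_real[where 'a=real]
    unfolding family_budget_set_def budget_set_def by auto
  have "stoch_le F_FSD (law_cdf Pst Z) (law_cdf P Z)" if "P \<in> Ps" for P
    using C3 that unfolding least_favorable_def by (intro dominance equiv) auto
  then have W_le: "\<forall>P\<in>Ps. W Pst Z \<le> W P Z"
    using W_fam_cons Z_in unfolding family_consistent_def by blast
  have W_eq: "W Pst Z = W Pst Xt"
    using W_law_inv Pst Z_payoff Xt(1) Z(2) unfolding law_invariant_family_def by blast
  have "AE \<omega> in Q. Z \<omega> = Xt \<omega>" by (rule unique_robust_solution_AE_eq[OF unique_sol Z_in Pst W_eq W_le])
  then have "(\<integral>\<omega>. Z \<omega> \<partial>Q) = (\<integral>\<omega>. Xt \<omega> \<partial>Q)"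
    by (intro integral_cong_AE payoffD(1)[OF Z_payoff S_meas S_nonneg] payoffD(1)[OF Xt(1) S_meas S_nonneg])
  with Z_cheaper show False unfolding price_def by simp
qed

end
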